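(* Let $\mathbb{S}$ be a locally finite, unbounded subset of $[0,\infty)$ with $0\in\mathbb{S}$, and let $(X_t)_{t\in\mathbb{N}}$ be $\mathbb{S}$-valued, adapted to a filtration $(\mathcal{F}_t)$, with $\mathbb{P}[X_1=0]=1$. Suppose that for each $x,y\in\mathbb{S}$ there exist $m(x,y)\in\mathbb{N}$, $\varphi(x,y)>0$ with $\mathbb{P}[X_{t+m(X_t,y)}=y\mid\mathcal{F}_t]\ge\varphi(X_t,y)$ a.s. for all $t$. Writing $\Delta_t:=X_{t+1}-X_t$, suppose there exists $B<\infty$ with $\mathbb{E}[\Delta_t^2\mid\mathcal{F}_t]\le B$ a.s. for all $t$, and there exist $x_0,c\in(0,\infty)$ such that on $\{X_t\ge x_0\}$, $\mathbb{E}[\Delta_t\mid\mathcal{F}_t]\ge-c/X_t$ a.s. for all $t$. Let $\Phi:[0,\infty)\to[0,\infty)$ be nondecreasing. Then there exists $\varepsilon>0$ such that for all $y$ sufficiently large, $$\mathbb{P}[M_1\ge y]\le2\,\mathbb{P}\Big[\sum_{t=1}^{\eta_1}\Phi(X_t)\ge\varepsilon y^2\Phi(y/2)\Big].$$ In particular, $\mathbb{P}[\eta_1\ge x]\ge\frac12\mathbb{P}[M_1\ge(x/\varepsilon)^{1/2}]$ for all $x$ sufficiently large.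
   Context: $\tau_0:=1$, $\tau_1:=\min\{t>1:X_t=0\}$ ($\min\emptyset=\infty$), $\eta_1:=\tau_1-\tau_0$, and $M_1:=\sup_{\tau_0\le t<\tau_1}X_t$. *)

theory Defs
  imports "HOL-Probability.Probability"
begin

text \<open>Excursion quantities for a process X indexed by nat (time starts at 1).
  tau0 = 1, tau1 = min {t > 1. X t = 0} (infinity if empty), eta1 = tau1 - tau0,
  M1 = sup of X t over tau0 <= t < tau1.\<close>

definition tau1 :: "(nat \<Rightarrow> 'a \<Rightarrow> real) \<Rightarrow> 'a \<Rightarrow> enat" where
  "tau1 X \<omega> = (if \<exists>t>1. X t \<omega> = 0 then enat (LEAST t. t > 1 \<and> X t \<omega> = 0) else \<infinity>)"

definition eta1 :: "(nat \<Rightarrow> 'a \<Rightarrow> real) \<Rightarrow> 'a \<Rightarrow> enat" where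
  "eta1 X \<omega> = tau1 X \<omega> - enat 1"

definition M1 :: "(nat \<Rightarrow> 'a \<Rightarrow> real) \<Rightarrow> 'a \<Rightarrow> ereal" where
  "M1 X \<omega> = (SUP t \<in> {t. 1 \<le> t \<and> enat t < tau1 X \<omega>}. ereal (X t \<omega>))"

definition additive_functional :: "(real \<Rightarrow> real) \<Rightarrow> (nat \<Rightarrow> 'a \<Rightarrow> real) \<Rightarrow> 'a \<Rightarrow> ennreal" where
  "additive_functional \<Phi> X \<omega> =
     (\<Sum>t. if 1 \<le> t \<and> enat t \<le> eta1 X \<omega> then ennreal (\<Phi> (X t \<omega>)) else 0)"

end

theory Submission
  imports Defs
begin

text \<open>
  Let \<open>s\<close> be the first time the excursion reaches level \<open>y\<close>. Write the later increments of
  \<open>X\<close> as conditional drift plus martingale difference (with conditional variance at most \<open>B\<close>),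
  and stop the martingale part when \<open>X\<close> first falls to \<open>y / 2\<close>. While \<open>X > y / 2 \<ge> x\<^sub>0\<close>
  the drift is at least \<open>-2c / y\<close>, so a fall from \<open>y\<close> to \<open>y / 2\<close> within \<open>n \<approx> \<epsilon> y\<^sup>2\<close> steps forces the
  stopped martingale below \<open>-y / 4\<close>; by orthogonality of martingale differences its second moment
  is at most \<open>n B\<close> times the probability of the first-passage event. Chebyshev's inequality then
  shows that with conditional probability at least \<open>1 / 2\<close> the process stays above \<open>y / 2\<close> for
  \<open>n\<close> steps, during which the excursion continues and each step contributes at least \<open>\<Phi> (y / 2)\<close>
  to the additive functional. Summing over the disjoint first-passage events gives
  \<open>P[M\<^sub>1 \<ge> y] \<le> 2 P[the excursion spends \<epsilon> y\<^sup>2 consecutive steps above y / 2]\<close>.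
\<close>

lemma enat_less_tau1_iff:
  "enat k < tau1 X \<omega> \<longleftrightarrow> (\<forall>u\<in>{1<..k}. X u \<omega> \<noteq> 0)"
proof (cases "\<exists>t>1. X t \<omega> = 0")
  case True
  define L where "L = (LEAST t. t > 1 \<and> X t \<omega> = 0)"
  have L: "1 < L" "X L \<omega> = 0"
    using LeastI_ex[OF True] unfolding L_def by auto
  have L_min: "L \<le> u" if "1 < u" "X u \<omega> = 0" for u
    using that unfolding L_def by (simp add: Least_le)
  have "k < L \<longleftrightarrow> (\<forall>u\<in>{1<..k}. X u \<omega> \<noteq> 0)"
  proof
    show "\<forall>u\<in>{1<..k}. X u \<omega> \<noteq> 0" if "k < L"
      using that L_min by (meson greaterThanAtMost_iff le_less_trans not_less)
    show "k < L" if "\<forall>u\<in>{1<..k}. X u \<omega> \<noteq> 0"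
      using that L by (meson greaterThanAtMost_iff not_less)
  qed
  then show ?thesis
    using True by (simp add: tau1_def L_def)
next
  case False
  then show ?thesis
    by (auto simp: tau1_def)
qed

lemma enat_le_eta1_iff:
  "enat k \<le> eta1 X \<omega> \<longleftrightarrow> (\<forall>u\<in>{1<..k}. X u \<omega> \<noteq> 0)"
proof -
  have "enat 1 < tau1 X \<omega>"
    by (simp add: enat_less_tau1_iff)
  then have "enat k \<le> tau1 X \<omega> - enat 1 \<longleftrightarrow> enat k < tau1 X \<omega>"
    by (cases "tau1 X \<omega>") auto
  then show ?thesis
    by (simp add: eta1_def enat_less_tau1_iff)
qed

definition first_passage :: "(nat \<Rightarrow> 'a \<Rightarrow> real) \<Rightarrow> real \<Rightarrow> nat \<Rightarrow> 'a \<Rightarrow> bool" where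
  "first_passage X y s \<omega> \<longleftrightarrow>
     1 \<le> s \<and> y \<le> X s \<omega> \<and> (\<forall>u\<in>{1..<s}. X u \<omega> < y) \<and> (\<forall>u\<in>{1<..s}. X u \<omega> \<noteq> 0)"

lemma first_passage_unique:
  assumes "first_passage X y s \<omega>" and "first_passage X y s' \<omega>"
  shows "s = s'"
proof -
  have "\<not> s < s'" if "first_passage X y s \<omega>" "first_passage X y s' \<omega>" for s s'
    using that unfolding first_passage_def by (meson atLeastLessThan_iff not_less)
  then show ?thesis
    using assms by (meson linorder_neqE_nat)
qed

lemma exists_ge_if_M1_ge:
  assumes S_valued: "\<And>t. X t \<omega> \<in> S" and S_locfin: "finite (S \<inter> {..y})"
    and M1_ge: "ereal y \<le> M1 X \<omega>"
  shows "\<exists>t\<ge>1. enat t < tau1 X \<omega> \<and> y \<le> X t \<omega>"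
proof (rule ccontr)
  define T where "T = {t. 1 \<le> t \<and> enat t < tau1 X \<omega>}"
  assume "\<not> (\<exists>t\<ge>1. enat t < tau1 X \<omega> \<and> y \<le> X t \<omega>)"
  then have below: "X t \<omega> < y" if "t \<in> T" for t
    using that by (auto simp: T_def not_le)
  have "(\<lambda>t. ereal (X t \<omega>)) ` T \<subseteq> ereal ` (S \<inter> {..y})"
  proof (rule image_subsetI)
    show "ereal (X t \<omega>) \<in> ereal ` (S \<inter> {..y})" if "t \<in> T" for t
      using below[OF that] S_valued[of t] by (intro imageI) simp
  qed
  then have fin: "finite ((\<lambda>t. ereal (X t \<omega>)) ` T)"
    using S_locfin finite_subset by blast
  have "1 \<in> T"
    by (simp add: T_def enat_less_tau1_iff)
  then have "M1 X \<omega> = Max ((\<lambda>t. ereal (X t \<omega>)) ` T)"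
    unfolding M1_def T_def[symmetric] by (intro cSup_eq_Max fin) blast
  also have "\<dots> \<in> (\<lambda>t. ereal (X t \<omega>)) ` T"
    using fin \<open>1 \<in> T\<close> by (intro Max_in) auto
  finally obtain t where "t \<in> T" "M1 X \<omega> = ereal (X t \<omega>)"
    by blast
  then show False
    using below M1_ge by fastforce
qed

lemma first_passage_if_reaches:
  assumes "1 \<le> t" and "enat t < tau1 X \<omega>" and "y \<le> X t \<omega>"
  shows "\<exists>s. first_passage X y s \<omega>"
proof -
  define s where "s = (LEAST s. 1 \<le> s \<and> y \<le> X s \<omega>)"
  have s: "1 \<le> s" "y \<le> X s \<omega>" and "s \<le> t"
    using LeastI[of "\<lambda>s. 1 \<le> s \<and> y \<le> X s \<omega>" t] Least_le[of "\<lambda>s. 1 \<le> s \<and> y \<le> X s \<omega>" t] assms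
    unfolding s_def by auto
  have "X u \<omega> < y" if "u \<in> {1..<s}" for u
    using not_less_Least[of u "\<lambda>s. 1 \<le> s \<and> y \<le> X s \<omega>"] that
    unfolding s_def[symmetric] by (simp add: not_le)
  moreover have "X u \<omega> \<noteq> 0" if "u \<in> {1<..s}" for u
    using assms(2) \<open>s \<le> t\<close> that by (simp add: enat_less_tau1_iff)
  ultimately show ?thesis
    using s unfolding first_passage_def by blast
qed

definition excursion_stays_above :: "(nat \<Rightarrow> 'a \<Rightarrow> real) \<Rightarrow> real \<Rightarrow> nat \<Rightarrow> 'a \<Rightarrow> bool" where
  "excursion_stays_above X a n \<omega> \<longleftrightarrow>
     (\<exists>s\<ge>1. (\<forall>t\<in>{1<..s}. X t \<omega> \<noteq> 0) \<and> (\<forall>t\<in>{s..<s+n}. a < X t \<omega>))"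

lemma excursion_stays_aboveE:
  assumes "excursion_stays_above X a n \<omega>" and "a \<ge> 0"
  obtains s where "s \<ge> 1" and "\<And>t. t \<in> {s..<s+n} \<Longrightarrow> a < X t \<omega> \<and> enat t \<le> eta1 X \<omega>"
proof -
  obtain s where "s \<ge> 1" and nonzero: "\<forall>t\<in>{1<..s}. X t \<omega> \<noteq> 0"
    and above: "\<forall>t\<in>{s..<s+n}. a < X t \<omega>"
    using assms(1) unfolding excursion_stays_above_def by blast
  have nz: "X u \<omega> \<noteq> 0" if "u \<in> {1<..<s+n}" for u
  proof (cases "u \<le> s")
    case False
    then have "a < X u \<omega>"
      using above that by simp
    then show ?thesis
      using \<open>a \<ge> 0\<close> by linarith
  qed (use that nonzero in simp)
  have "a < X t \<omega> \<and> enat t \<le> eta1 X \<omega>" if "t \<in> {s..<s+n}" for t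
  proof
    show "a < X t \<omega>"
      using above that by blast
    show "enat t \<le> eta1 X \<omega>"
      unfolding enat_le_eta1_iff using that by (intro ballI nz) auto
  qed
  with \<open>s \<ge> 1\<close> show ?thesis
    by (rule that)
qed

lemma excursion_stays_above_if_first_passage:
  assumes "first_passage X y s \<omega>" and "\<forall>j<n. a < X (s + j) \<omega>"
  shows "excursion_stays_above X a n \<omega>"
proof -
  have "a < X t \<omega>" if "t \<in> {s..<s + n}" for t
    using assms(2)[rule_format, of "t - s"] that by auto
  then show ?thesis
    using assms(1) unfolding excursion_stays_above_def first_passage_def by blast
qed

lemma excursion_stays_above_imp_eta1_ge:
  assumes "excursion_stays_above X a n \<omega>" and "a \<ge> 0"
  shows "enat n \<le> eta1 X \<omega>"
proof (cases n)
  case (Suc m)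
  obtain s where "s \<ge> 1" and stay: "\<And>t. t \<in> {s..<s+n} \<Longrightarrow> a < X t \<omega> \<and> enat t \<le> eta1 X \<omega>"
    using excursion_stays_aboveE[OF assms] by metis
  have "enat (s + m) \<le> eta1 X \<omega>"
    using stay[of "s + m"] Suc by simp
  moreover have "enat n \<le> enat (s + m)"
    using Suc \<open>s \<ge> 1\<close> by simp
  ultimately show ?thesis
    by (rule order_trans[rotated])
qed (simp add: zero_enat_def[symmetric])

lemma excursion_stays_above_imp_additive_functional_ge:
  assumes "excursion_stays_above X a n \<omega>" and "a \<ge> 0"
    and \<Phi>_mono: "mono_on {0..} \<Phi>" and \<Phi>_nonneg: "\<And>x. x \<ge> 0 \<Longrightarrow> \<Phi> x \<ge> 0"
  shows "ennreal (real n * \<Phi> a) \<le> additive_functional \<Phi> X \<omega>"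
proof -
  obtain s where "s \<ge> 1" and stay: "\<And>t. t \<in> {s..<s+n} \<Longrightarrow> a < X t \<omega> \<and> enat t \<le> eta1 X \<omega>"
    using excursion_stays_aboveE[OF assms(1,2)] by metis
  define f where "f t = (if 1 \<le> t \<and> enat t \<le> eta1 X \<omega> then ennreal (\<Phi> (X t \<omega>)) else 0)" for t
  have "ennreal (\<Phi> a) \<le> f t" if "t \<in> {s..<s+n}" for t
  proof -
    have "f t = ennreal (\<Phi> (X t \<omega>))"
      using stay[OF that] that \<open>s \<ge> 1\<close> by (simp add: f_def)
    moreover have "\<Phi> a \<le> \<Phi> (X t \<omega>)"
      using stay[OF that] \<open>a \<ge> 0\<close> by (intro mono_onD[OF \<Phi>_mono]) auto
    ultimately show ?thesis
      by (simp add: ennreal_leI)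
  qed
  then have "(\<Sum>t\<in>{s..<s+n}. ennreal (\<Phi> a)) \<le> (\<Sum>t\<in>{s..<s+n}. f t)"
    by (rule sum_mono)
  also have "\<dots> \<le> (\<Sum>t. f t)"
    by (rule sum_le_suminf) (auto intro: summableI)
  also have "\<dots> = additive_functional \<Phi> X \<omega>"
    by (simp only: additive_functional_def f_def)
  finally show ?thesis
    using \<Phi>_nonneg[OF \<open>a \<ge> 0\<close>] by (simp add: ennreal_mult ennreal_of_nat_eq_real_of_nat)
qed

lemma ereal_le_ereal_of_enat_iff:
  "ereal x \<le> ereal_of_enat e \<longleftrightarrow> enat (nat \<lceil>x\<rceil>) \<le> e"
proof (cases e)
  case (enat m)
  then show ?thesis
    by (simp add: ceiling_le_iff nat_le_iff)
qed simp

lemma eta1_ge_sets: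
  assumes "\<And>t. X t \<in> borel_measurable M"
  shows "{\<omega>\<in>space M. ereal x \<le> ereal_of_enat (eta1 X \<omega>)} \<in> sets M"
  using assms unfolding ereal_le_ereal_of_enat_iff enat_le_eta1_iff by measurable

lemma additive_functional_measurable:
  assumes [measurable]: "\<And>t. X t \<in> borel_measurable M"
    and X_nonneg: "\<And>t \<omega>. \<omega> \<in> space M \<Longrightarrow> X t \<omega> \<ge> 0" and \<Phi>_mono: "mono_on {0..} \<Phi>"
  shows "additive_functional \<Phi> X \<in> borel_measurable M"
proof -
  have "mono (\<lambda>x. \<Phi> (max 0 x))"
  proof (rule monoI)
    show "\<Phi> (max 0 a) \<le> \<Phi> (max 0 b)" if "a \<le> b" for a b :: real
      using that by (intro mono_onD[OF \<Phi>_mono]) auto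
  qed
  then have [measurable]: "(\<lambda>x. \<Phi> (max 0 x)) \<in> borel_measurable borel"
    by (rule borel_measurable_mono)
  have "additive_functional \<Phi> X \<omega>
      = (\<Sum>t. if 1 \<le> t \<and> (\<forall>u\<in>{1<..t}. X u \<omega> \<noteq> 0) then ennreal (\<Phi> (max 0 (X t \<omega>))) else 0)"
    if "\<omega> \<in> space M" for \<omega>
    unfolding additive_functional_def enat_le_eta1_iff
    using X_nonneg[OF that] by (intro suminf_cong) (simp add: max_absorb2)
  then show ?thesis
    by (subst measurable_cong) measurable
qed

lemma square_integrable_mult:
  fixes f g :: "'a \<Rightarrow> real"
  assumes [measurable]: "f \<in> borel_measurable M" "g \<in> borel_measurable M"
    and "integrable M (\<lambda>x. (f x)\<^sup>2)" "integrable M (\<lambda>x. (g x)\<^sup>2)"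
  shows "integrable M (\<lambda>x. f x * g x)"
proof (rule Bochner_Integration.integrable_bound)
  show "integrable M (\<lambda>x. (f x)\<^sup>2 + (g x)\<^sup>2)"
    using assms by simp
  have "\<bar>f x * g x\<bar> \<le> (f x)\<^sup>2 + (g x)\<^sup>2" for x
  proof -
    have "2 * (\<bar>f x\<bar> * \<bar>g x\<bar>) \<le> (f x)\<^sup>2 + (g x)\<^sup>2"
      using sum_squares_bound[of "\<bar>f x\<bar>" "\<bar>g x\<bar>"] by (simp add: mult.assoc)
    moreover have "0 \<le> \<bar>f x\<bar> * \<bar>g x\<bar>"
      by simp
    ultimately have "\<bar>f x\<bar> * \<bar>g x\<bar> \<le> (f x)\<^sup>2 + (g x)\<^sup>2"
      by linarith
    then show ?thesis
      by (simp add: abs_mult)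
  qed
  then show "AE x in M. norm (f x * g x) \<le> norm ((f x)\<^sup>2 + (g x)\<^sup>2)"
    by simp
qed simp

lemma square_integrable_add:
  fixes f g :: "'a \<Rightarrow> real"
  assumes [measurable]: "f \<in> borel_measurable M" "g \<in> borel_measurable M"
    and "integrable M (\<lambda>x. (f x)\<^sup>2)" "integrable M (\<lambda>x. (g x)\<^sup>2)"
  shows "integrable M (\<lambda>x. (f x + g x)\<^sup>2)"
proof -
  have "integrable M (\<lambda>x. (f x)\<^sup>2 + (g x)\<^sup>2 + 2 * (f x * g x))"
    using assms square_integrable_mult[of f M g] by simp
  then show ?thesis
    by (simp add: power2_sum mult.assoc)
qed

lemma square_integrable_indicator_mult:
  fixes f :: "'a \<Rightarrow> real"
  assumes "A \<in> sets M" and "integrable M (\<lambda>x. (f x)\<^sup>2)"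
  shows "integrable M (\<lambda>x. (indicator A x * f x)\<^sup>2)"
proof -
  have "(indicator A x * f x)\<^sup>2 = indicator A x * (f x)\<^sup>2" for x
    by (cases "x \<in> A") simp_all
  then show ?thesis
    using integrable_mult_indicator[OF assms] by simp
qed

lemma square_integrable_sum:
  fixes e :: "nat \<Rightarrow> 'a \<Rightarrow> real"
  assumes [measurable]: "\<And>k. e k \<in> borel_measurable M"
    and "\<And>k. integrable M (\<lambda>x. (e k x)\<^sup>2)"
  shows "integrable M (\<lambda>x. (\<Sum>k<n. e k x)\<^sup>2)"
  by (induction n) (simp_all add: square_integrable_add assms)

lemma integral_square_sum_orthogonal:
  fixes e :: "nat \<Rightarrow> 'a \<Rightarrow> real"
  assumes [measurable]: "\<And>k. e k \<in> borel_measurable M"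
    and sq: "\<And>k. integrable M (\<lambda>x. (e k x)\<^sup>2)"
    and orth: "\<And>k. (\<integral>x. (\<Sum>j<k. e j x) * e k x \<partial>M) = 0"
  shows "(\<integral>x. (\<Sum>k<n. e k x)\<^sup>2 \<partial>M) = (\<Sum>k<n. \<integral>x. (e k x)\<^sup>2 \<partial>M)"
proof (induction n)
  case (Suc n)
  have sum_sq: "integrable M (\<lambda>x. (\<Sum>j<n. e j x)\<^sup>2)"
    by (rule square_integrable_sum) (simp_all add: sq)
  have cross: "integrable M (\<lambda>x. (\<Sum>j<n. e j x) * e n x)"
    by (rule square_integrable_mult) (simp_all add: sum_sq sq)
  have "(\<integral>x. (\<Sum>k<Suc n. e k x)\<^sup>2 \<partial>M)
      = (\<integral>x. (\<Sum>j<n. e j x)\<^sup>2 + (e n x)\<^sup>2 + 2 * ((\<Sum>j<n. e j x) * e n x) \<partial>M)"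
    by (simp add: power2_sum mult.assoc)
  also have "\<dots> = (\<integral>x. (\<Sum>j<n. e j x)\<^sup>2 \<partial>M) + (\<integral>x. (e n x)\<^sup>2 \<partial>M)"
    using sum_sq cross sq orth by simp
  finally show ?case
    using Suc.IH by simp
qed simp

lemma sum_compensated_increments_le:
  fixes x g :: "nat \<Rightarrow> real" and y c :: real and r n :: nat
  assumes "y > 0" "c > 0" "y \<le> x 0" "x r \<le> y / 2" "r \<le> n" "8 * c * real n \<le> y\<^sup>2"
    and g: "\<And>k. k < r \<Longrightarrow> - 2 * c / y \<le> g k"
  shows "(\<Sum>k<r. (x (Suc k) - x k) - g k) \<le> - y / 4"
proof -
  have "(\<Sum>k<r. (x (Suc k) - x k) - g k) = (x r - x 0) - (\<Sum>k<r. g k)"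
    by (subst sum_subtractf, subst sum_lessThan_telescope) (rule refl)
  also have "\<dots> \<le> (x r - x 0) + 2 * c * r / y"
  proof -
    have "(\<Sum>k<r. - 2 * c / y) \<le> (\<Sum>k<r. g k)"
      using g by (intro sum_mono) simp
    moreover have "(\<Sum>k<r. - 2 * c / y) = - (2 * c * r / y)"
      by simp
    ultimately show ?thesis
      by linarith
  qed
  also have "2 * c * r / y \<le> 2 * c * n / y"
    using assms by (intro divide_right_mono) auto
  also have "\<dots> = (8 * c * real n) / (4 * y)"
    by simp
  also have "\<dots> \<le> y\<^sup>2 / (4 * y)"
    using assms by (intro divide_right_mono) auto
  also have "\<dots> = y / 4"
    using assms by (simp add: power2_eq_square)
  finally show ?thesis
    using assms by simp
qed

lemma stopped_compensated_sum_le: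
  fixes x g :: "nat \<Rightarrow> real" and y c :: real and n :: nat
  assumes "y > 0" "c > 0" "y \<le> x 0" and drop: "\<exists>j<n. x j \<le> y / 2" and "8 * c * real n \<le> y\<^sup>2"
    and g: "\<And>k. y / 2 < x k \<Longrightarrow> - 2 * c / y \<le> g k"
  shows "(\<Sum>k<n. (if \<forall>j\<le>k. y / 2 < x j then 1 else 0) * ((x (Suc k) - x k) - g k)) \<le> - y / 4"
proof -
  define r where "r = (LEAST j. x j \<le> y / 2)"
  obtain j where "j < n" "x j \<le> y / 2"
    using drop by blast
  then have r: "x r \<le> y / 2" "r \<le> n"
    using LeastI[of "\<lambda>j. x j \<le> y / 2" j] Least_le[of "\<lambda>j. x j \<le> y / 2" j] by (auto simp: r_def)
  have above: "y / 2 < x k" if "k < r" for k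
    using not_less_Least[of k "\<lambda>j. x j \<le> y / 2"] that by (simp add: r_def)
  have "(\<forall>j\<le>k. y / 2 < x j) \<longleftrightarrow> k < r" for k
    using above r(1) by (meson le_less_trans not_le order.refl)
  then have "(\<Sum>k<n. (if \<forall>j\<le>k. y / 2 < x j then 1 else 0) * ((x (Suc k) - x k) - g k))
      = (\<Sum>k<n. if k < r then (x (Suc k) - x k) - g k else 0)"
    by (intro sum.cong) auto
  also have "\<dots> = (\<Sum>k\<in>{k\<in>{..<n}. k < r}. (x (Suc k) - x k) - g k)"
    by (rule sum.inter_filter[symmetric]) simp
  also have "\<dots> = (\<Sum>k<r. (x (Suc k) - x k) - g k)"
    using r(2) by (intro sum.cong) auto
  also have "\<dots> \<le> - y / 4"
    using assms r above by (intro sum_compensated_increments_le) auto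
  finally show ?thesis .
qed

lemma nat_ceiling_quadratic_bounds:
  fixes B' c y :: real
  assumes "B' \<ge> 0" "c > 0" "y \<ge> 64 * (B' + c) + 1"
  defines "n \<equiv> nat \<lceil>1 / (64 * (B' + c)) * y\<^sup>2\<rceil>"
  shows "8 * c * real n \<le> y\<^sup>2" and "16 * real n * B' / y\<^sup>2 \<le> 1 / 2"
proof -
  define K where "K = B' + c"
  have K: "K > 0" "c \<le> K" "B' \<le> K"
    using assms by (auto simp: K_def)
  have "y \<ge> 1"
    using assms K by (simp add: K_def)
  then have "y \<le> y\<^sup>2"
    by (simp add: power2_eq_square)
  then have y_sq: "64 * K \<le> y\<^sup>2"
    using assms by (simp add: K_def)
  have "real n \<le> y\<^sup>2 / (64 * K) + 1"
    using of_int_ceiling_le_add_one[of "y\<^sup>2 / (64 * K)"] K by (simp add: n_def K_def)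
  then have "real n * K \<le> (y\<^sup>2 / (64 * K) + 1) * K"
    using K by (intro mult_right_mono) auto
  also have "\<dots> = y\<^sup>2 / 64 + K"
    using K by (simp add: field_simps)
  finally have nK: "real n * K \<le> y\<^sup>2 / 64 + K" .
  have "8 * c * real n \<le> 8 * (real n * K)"
    using mult_right_mono[OF \<open>c \<le> K\<close>, of "real n"] by (simp add: mult.commute)
  also have "\<dots> \<le> y\<^sup>2"
    using nK y_sq zero_le_power2[of y] by linarith
  finally show "8 * c * real n \<le> y\<^sup>2" .
  have "16 * real n * B' \<le> 16 * (real n * K)"
    using mult_left_mono[OF \<open>B' \<le> K\<close>, of "real n"] by simp
  also have "\<dots> \<le> y\<^sup>2 / 2"
    using nK y_sq zero_le_power2[of y] by linarith
  finally show "16 * real n * B' / y\<^sup>2 \<le> 1 / 2"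
    using \<open>y \<ge> 1\<close> by (simp add: divide_le_eq)
qed

locale lamperti_process = prob_space M for M :: "'a measure" +
  fixes F :: "nat \<Rightarrow> 'a measure" and X :: "nat \<Rightarrow> 'a \<Rightarrow> real" and B x0 c :: real
  assumes filt_sub: "\<And>t. subalgebra M (F t)"
    and filt_mono: "\<And>s t. s \<le> t \<Longrightarrow> sets (F s) \<subseteq> sets (F t)"
    and adapted: "\<And>t. X t \<in> borel_measurable (F t)"
    and B_fin: "\<And>t. t \<ge> 1 \<Longrightarrow>
        AE \<omega> in M. nn_cond_exp M (F t) (\<lambda>\<omega>'. ennreal ((X (Suc t) \<omega>' - X t \<omega>')\<^sup>2)) \<omega> \<le> ennreal B"
    and c_pos: "c > 0"
    and drift: "\<And>t. t \<ge> 1 \<Longrightarrow>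
        AE \<omega> in M. X t \<omega> \<ge> x0 \<longrightarrow>
          real_cond_exp M (F t) (\<lambda>\<omega>'. X (Suc t) \<omega>' - X t \<omega>') \<omega> \<ge> - c / X t \<omega>"
begin

definition incr :: "nat \<Rightarrow> 'a \<Rightarrow> real" where
  "incr t \<omega> = X (Suc t) \<omega> - X t \<omega>"

definition cond_drift :: "nat \<Rightarrow> 'a \<Rightarrow> real" where
  "cond_drift t = real_cond_exp M (F t) (incr t)"

definition mart_incr :: "nat \<Rightarrow> 'a \<Rightarrow> real" where
  "mart_incr t \<omega> = incr t \<omega> - cond_drift t \<omega>"

lemma sigma_finite_subalgebra_F: "sigma_finite_subalgebra M (F t)"
proof -
  interpret finite_measure_subalgebra M "F t"
    by unfold_locales (rule filt_sub)
  show ?thesis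
    by unfold_locales
qed

lemma space_F: "space (F t) = space M"
  using filt_sub[of t] unfolding subalgebra_def by blast

lemma sets_F_in_sets: "A \<in> sets (F t) \<Longrightarrow> A \<in> sets M"
  using filt_sub[of t] unfolding subalgebra_def by blast

lemma measurable_F_imp_measurable: "f \<in> borel_measurable (F t) \<Longrightarrow> f \<in> borel_measurable M"
  using measurable_from_subalg[OF filt_sub] by blast

lemma measurable_F_mono:
  assumes "s \<le> t" and "f \<in> F s \<rightarrow>\<^sub>M N"
  shows "f \<in> F t \<rightarrow>\<^sub>M N"
proof (rule measurable_from_subalg[OF _ assms(2)])
  show "subalgebra (F t) (F s)"
    using filt_mono[OF assms(1)] by (simp add: subalgebra_def space_F)
qed

lemma X_measurable [measurable]: "X t \<in> borel_measurable M"
  by (rule measurable_F_imp_measurable[OF adapted])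

lemma incr_measurable_F: "incr t \<in> borel_measurable (F (Suc t))"
proof -
  have "X t \<in> borel_measurable (F (Suc t))"
    by (rule measurable_F_mono[OF _ adapted]) simp
  then show ?thesis
    unfolding incr_def using adapted by measurable
qed

lemma incr_measurable [measurable]: "incr t \<in> borel_measurable M"
  unfolding incr_def by measurable

lemma cond_drift_measurable_F: "cond_drift t \<in> borel_measurable (F t)"
  by (simp add: cond_drift_def)

lemma cond_drift_measurable [measurable]: "cond_drift t \<in> borel_measurable M"
  by (rule measurable_F_imp_measurable[OF cond_drift_measurable_F])

lemma cond_drift_ge:
  assumes "t \<ge> 1"
  shows "AE \<omega> in M. x0 \<le> X t \<omega> \<longrightarrow> - c / X t \<omega> \<le> cond_drift t \<omega>"
  using drift[OF assms] by (simp add: cond_drift_def incr_def[abs_def])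

lemma incr_sq_set_integral_le:
  assumes t: "t \<ge> 1" and A: "A \<in> sets (F t)"
  shows "integrable M (\<lambda>\<omega>. indicator A \<omega> * (incr t \<omega>)\<^sup>2)"
    and "(\<integral>\<omega>. indicator A \<omega> * (incr t \<omega>)\<^sup>2 \<partial>M) \<le> max B 0 * measure M A"
proof -
  interpret sigma_finite_subalgebra M "F t"
    by (rule sigma_finite_subalgebra_F)
  have A_M [measurable]: "A \<in> sets M"
    by (rule sets_F_in_sets[OF A])
  have "(\<integral>\<^sup>+\<omega>. ennreal (indicator A \<omega> * (incr t \<omega>)\<^sup>2) \<partial>M)
      = (\<integral>\<^sup>+\<omega>. indicator A \<omega> * ennreal ((incr t \<omega>)\<^sup>2) \<partial>M)"
    by (intro nn_integral_cong) (simp add: indicator_def)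
  also have "\<dots> = (\<integral>\<^sup>+\<omega>. indicator A \<omega> * nn_cond_exp M (F t) (\<lambda>\<omega>. ennreal ((incr t \<omega>)\<^sup>2)) \<omega> \<partial>M)"
    by (rule nn_cond_exp_intg[symmetric]) (use A in auto)
  also have "\<dots> \<le> (\<integral>\<^sup>+\<omega>. indicator A \<omega> * ennreal (max B 0) \<partial>M)"
    using B_fin[OF t]
    by (intro nn_integral_mono_AE) (auto elim!: eventually_mono intro!: mult_left_mono
        simp: incr_def ennreal_le_iff2)
  also have "\<dots> = ennreal (max B 0) * emeasure M A"
    using nn_integral_cmult_indicator[OF A_M, of "ennreal (max B 0)"] by (simp add: mult.commute)
  also have "\<dots> = ennreal (max B 0 * measure M A)"
    by (simp add: ennreal_mult emeasure_eq_measure)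
  finally have le: "(\<integral>\<^sup>+\<omega>. ennreal (indicator A \<omega> * (incr t \<omega>)\<^sup>2) \<partial>M) \<le> ennreal (max B 0 * measure M A)" .
  then show int: "integrable M (\<lambda>\<omega>. indicator A \<omega> * (incr t \<omega>)\<^sup>2)"
    by (intro integrableI_nonneg) (auto simp: top.not_eq_extremum intro: le_less_trans)
  show "(\<integral>\<omega>. indicator A \<omega> * (incr t \<omega>)\<^sup>2 \<partial>M) \<le> max B 0 * measure M A"
    using le by (subst (asm) nn_integral_eq_integral[OF int]) auto
qed

lemma incr_sq_integrable:
  assumes "t \<ge> 1"
  shows "integrable M (\<lambda>\<omega>. (incr t \<omega>)\<^sup>2)"
proof -
  have "integrable M (\<lambda>\<omega>. indicator (space M) \<omega> * (incr t \<omega>)\<^sup>2)"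
    using incr_sq_set_integral_le(1)[OF assms, of "space M"] sets.top[of "F t"] by (simp add: space_F)
  moreover have "integrable M (\<lambda>\<omega>. indicator (space M) \<omega> * (incr t \<omega>)\<^sup>2)
      \<longleftrightarrow> integrable M (\<lambda>\<omega>. (incr t \<omega>)\<^sup>2)"
    by (rule Bochner_Integration.integrable_cong) simp_all
  ultimately show ?thesis
    by blast
qed

lemma cond_drift_sq_integrable:
  assumes "t \<ge> 1"
  shows "integrable M (\<lambda>\<omega>. (cond_drift t \<omega>)\<^sup>2)"
proof -
  interpret sigma_finite_subalgebra M "F t"
    by (rule sigma_finite_subalgebra_F)
  have "integrable M (incr t)"
    by (rule square_integrable_imp_integrable) (simp_all add: incr_sq_integrable[OF assms])
  then show ?thesis
    using integrable_convex_cond_exp[of "incr t" UNIV _ _ power2] incr_sq_integrable[OF assms] convex_power2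
    by (simp add: cond_drift_def)
qed

lemma mart_incr_measurable_F: "mart_incr t \<in> borel_measurable (F (Suc t))"
proof -
  have "cond_drift t \<in> borel_measurable (F (Suc t))"
    by (rule measurable_F_mono[OF _ cond_drift_measurable_F]) simp
  then show ?thesis
    unfolding mart_incr_def using incr_measurable_F by measurable
qed

lemma mart_incr_measurable [measurable]: "mart_incr t \<in> borel_measurable M"
  unfolding mart_incr_def by measurable

lemma mart_incr_sq_integrable:
  assumes "t \<ge> 1"
  shows "integrable M (\<lambda>\<omega>. (mart_incr t \<omega>)\<^sup>2)"
  using square_integrable_add[of "incr t" M "\<lambda>\<omega>. - cond_drift t \<omega>"]
    incr_sq_integrable[OF assms] cond_drift_sq_integrable[OF assms] by (simp add: mart_incr_def)

lemma mart_incr_orthogonal: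
  assumes t: "t \<ge> 1" and f: "f \<in> borel_measurable (F t)" and f_sq: "integrable M (\<lambda>\<omega>. (f \<omega>)\<^sup>2)"
  shows "(\<integral>\<omega>. f \<omega> * mart_incr t \<omega> \<partial>M) = 0"
proof -
  interpret sigma_finite_subalgebra M "F t"
    by (rule sigma_finite_subalgebra_F)
  have [measurable]: "f \<in> borel_measurable M"
    by (rule measurable_F_imp_measurable[OF f])
  have f_incr: "integrable M (\<lambda>\<omega>. f \<omega> * incr t \<omega>)"
    by (rule square_integrable_mult) (simp_all add: f_sq incr_sq_integrable[OF t])
  have f_drift: "integrable M (\<lambda>\<omega>. f \<omega> * cond_drift t \<omega>)"
    by (rule square_integrable_mult) (simp_all add: f_sq cond_drift_sq_integrable[OF t])
  have "(\<integral>\<omega>. f \<omega> * cond_drift t \<omega> \<partial>M) = (\<integral>\<omega>. f \<omega> * incr t \<omega> \<partial>M)"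
    unfolding cond_drift_def by (rule real_cond_exp_intg(2)) (simp_all add: f_incr f)
  then show ?thesis
    using f_incr f_drift by (simp add: mart_incr_def right_diff_distrib)
qed

lemma indicator_mart_incr_sq_le:
  assumes t: "t \<ge> 1" and A: "A \<in> sets (F t)"
  shows "(\<integral>\<omega>. (indicator A \<omega> * mart_incr t \<omega>)\<^sup>2 \<partial>M) \<le> max B 0 * measure M A"
proof -
  define h where "h \<omega> = indicator A \<omega> * cond_drift t \<omega>" for \<omega>
  have A_M [measurable]: "A \<in> sets M"
    by (rule sets_F_in_sets[OF A])
  have h_F: "h \<in> borel_measurable (F t)"
    unfolding h_def using A cond_drift_measurable_F by measurable
  have h_sq: "integrable M (\<lambda>\<omega>. (h \<omega>)\<^sup>2)"
    unfolding h_def by (rule square_integrable_indicator_mult[OF A_M cond_drift_sq_integrable[OF t]])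
  have h_mart: "integrable M (\<lambda>\<omega>. h \<omega> * mart_incr t \<omega>)"
    using measurable_F_imp_measurable[OF h_F]
    by (intro square_integrable_mult) (simp_all add: h_sq mart_incr_sq_integrable[OF t])
  have "(indicator A \<omega> * mart_incr t \<omega>)\<^sup>2
      = indicator A \<omega> * (incr t \<omega>)\<^sup>2 - 2 * (h \<omega> * mart_incr t \<omega>) - (h \<omega>)\<^sup>2" for \<omega>
    by (cases "\<omega> \<in> A") (simp_all add: h_def mart_incr_def power2_eq_square algebra_simps)
  then have "(\<integral>\<omega>. (indicator A \<omega> * mart_incr t \<omega>)\<^sup>2 \<partial>M)
      = (\<integral>\<omega>. indicator A \<omega> * (incr t \<omega>)\<^sup>2 \<partial>M) - 2 * (\<integral>\<omega>. h \<omega> * mart_incr t \<omega> \<partial>M)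
        - (\<integral>\<omega>. (h \<omega>)\<^sup>2 \<partial>M)"
    using incr_sq_set_integral_le(1)[OF t A] h_mart h_sq by simp
  also have "\<dots> \<le> (\<integral>\<omega>. indicator A \<omega> * (incr t \<omega>)\<^sup>2 \<partial>M)"
    using mart_incr_orthogonal[OF t h_F h_sq] by simp
  also have "\<dots> \<le> max B 0 * measure M A"
    by (rule incr_sq_set_integral_le(2)[OF t A])
  finally show ?thesis .
qed

lemma stopped_mart_sum_sq_le:
  fixes n :: nat
  assumes s: "s \<ge> 1" and A: "\<And>k. A k \<in> sets (F (s + k))"
    and E: "E \<in> sets M" and A_E: "\<And>k. A k \<subseteq> E"
  shows "integrable M (\<lambda>\<omega>. (\<Sum>k<n. indicator (A k) \<omega> * mart_incr (s + k) \<omega>)\<^sup>2)"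
    and "(\<integral>\<omega>. (\<Sum>k<n. indicator (A k) \<omega> * mart_incr (s + k) \<omega>)\<^sup>2 \<partial>M) \<le> n * (max B 0 * measure M E)"
proof -
  define e where "e k \<omega> = indicator (A k) \<omega> * mart_incr (s + k) \<omega>" for k \<omega>
  have A_M [measurable]: "A k \<in> sets M" for k
    by (rule sets_F_in_sets[OF A])
  have e_F: "e k \<in> borel_measurable (F (Suc (s + k)))" for k
  proof -
    have "A k \<in> sets (F (Suc (s + k)))"
      using filt_mono[of "s + k" "Suc (s + k)"] A by auto
    then show ?thesis
      using mart_incr_measurable_F unfolding e_def by measurable
  qed
  have e_M [measurable]: "e k \<in> borel_measurable M" for k
    by (rule measurable_F_imp_measurable[OF e_F])
  have e_sq: "integrable M (\<lambda>\<omega>. (e k \<omega>)\<^sup>2)" for k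
    unfolding e_def using s by (intro square_integrable_indicator_mult[OF A_M] mart_incr_sq_integrable) simp
  show "integrable M (\<lambda>\<omega>. (\<Sum>k<n. indicator (A k) \<omega> * mart_incr (s + k) \<omega>)\<^sup>2)"
    using square_integrable_sum[OF e_M e_sq] by (simp add: e_def)
  have orth: "(\<integral>\<omega>. (\<Sum>j<k. e j \<omega>) * e k \<omega> \<partial>M) = 0" for k
  proof -
    define f where "f \<omega> = indicator (A k) \<omega> * (\<Sum>j<k. e j \<omega>)" for \<omega>
    have "e j \<in> borel_measurable (F (s + k))" if "j < k" for j
      using that by (intro measurable_F_mono[OF _ e_F]) simp
    then have f_F: "f \<in> borel_measurable (F (s + k))"
      unfolding f_def using A by measurable
    have f_sq: "integrable M (\<lambda>\<omega>. (f \<omega>)\<^sup>2)"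
      unfolding f_def by (intro square_integrable_indicator_mult square_integrable_sum) (simp_all add: e_sq)
    show ?thesis
      using mart_incr_orthogonal[OF _ f_F f_sq] s by (simp add: e_def f_def mult_ac)
  qed
  have "(\<integral>\<omega>. (\<Sum>k<n. e k \<omega>)\<^sup>2 \<partial>M) = (\<Sum>k<n. \<integral>\<omega>. (e k \<omega>)\<^sup>2 \<partial>M)"
    by (rule integral_square_sum_orthogonal[OF e_M e_sq orth])
  also have "\<dots> \<le> (\<Sum>k<n. max B 0 * measure M E)"
  proof (rule sum_mono)
    fix k
    have "(\<integral>\<omega>. (e k \<omega>)\<^sup>2 \<partial>M) \<le> max B 0 * measure M (A k)"
      unfolding e_def using s by (intro indicator_mart_incr_sq_le A) simp
    also have "\<dots> \<le> max B 0 * measure M E"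
      using A_E E by (intro mult_left_mono finite_measure_mono) auto
    finally show "(\<integral>\<omega>. (e k \<omega>)\<^sup>2 \<partial>M) \<le> max B 0 * measure M E" .
  qed
  finally show "(\<integral>\<omega>. (\<Sum>k<n. indicator (A k) \<omega> * mart_incr (s + k) \<omega>)\<^sup>2 \<partial>M)
      \<le> n * (max B 0 * measure M E)"
    by (simp add: e_def)
qed

lemma X_measurable_F_le: "u \<le> t \<Longrightarrow> X u \<in> borel_measurable (F t)"
  by (rule measurable_F_mono[OF _ adapted])

lemma pred_F_Ball_X:
  assumes "finite I" and "\<And>i. i \<in> I \<Longrightarrow> \<tau> i \<le> t" and P: "\<And>i. Measurable.pred borel (P i)"
  shows "Measurable.pred (F t) (\<lambda>\<omega>. \<forall>i\<in>I. P i (X (\<tau> i) \<omega>))"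
proof (rule pred_intros_finite(3)[OF assms(1)])
  fix i assume "i \<in> I"
  then have "X (\<tau> i) \<in> borel_measurable (F t)"
    using assms(2) by (simp add: X_measurable_F_le)
  then show "Measurable.pred (F t) (\<lambda>\<omega>. P i (X (\<tau> i) \<omega>))"
    by (rule measurable_compose[OF _ P])
qed

lemma stopped_mart_sum_le_if_drop:
  assumes "y \<le> X s \<omega>" and drop: "\<exists>j<n. X (s + j) \<omega> \<le> y / 2"
    and "y > 0" and "x0 \<le> y / 2" and "8 * c * real n \<le> y\<^sup>2"
    and drift_\<omega>: "\<And>k. x0 \<le> X (s + k) \<omega> \<Longrightarrow> - c / X (s + k) \<omega> \<le> cond_drift (s + k) \<omega>"
  shows "(\<Sum>k<n. (if \<forall>j\<le>k. y / 2 < X (s + j) \<omega> then 1 else 0) * mart_incr (s + k) \<omega>) \<le> - y / 4"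
proof -
  have "- 2 * c / y \<le> cond_drift (s + k) \<omega>" if "y / 2 < X (s + k) \<omega>" for k
  proof -
    have "c / X (s + k) \<omega> \<le> c / (y / 2)"
      using that \<open>y > 0\<close> c_pos by (intro divide_left_mono) auto
    then have "c / X (s + k) \<omega> \<le> 2 * c / y"
      by (simp add: mult.commute)
    moreover have "- c / X (s + k) \<omega> \<le> cond_drift (s + k) \<omega>"
      using drift_\<omega> that \<open>x0 \<le> y / 2\<close> by simp
    ultimately show ?thesis
      by linarith
  qed
  then have "(\<Sum>k<n. (if \<forall>j\<le>k. y / 2 < X (s + j) \<omega> then 1 else 0)
      * ((X (s + Suc k) \<omega> - X (s + k) \<omega>) - cond_drift (s + k) \<omega>)) \<le> - y / 4"
    using assms c_pos by (intro stopped_compensated_sum_le[where x = "\<lambda>j. X (s + j) \<omega>"]) auto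
  then show ?thesis
    by (simp add: mart_incr_def incr_def)
qed

lemma drop_below_half_prob_le:
  fixes n :: nat
  assumes s: "s \<ge> 1" and E: "E \<in> sets (F s)" and E_ge: "\<And>\<omega>. \<omega> \<in> E \<Longrightarrow> y \<le> X s \<omega>"
    and y: "y > 0" and x0_le: "x0 \<le> y / 2" and n: "8 * c * real n \<le> y\<^sup>2"
  shows "measure M (E \<inter> {\<omega>\<in>space M. \<exists>j<n. X (s + j) \<omega> \<le> y / 2})
           \<le> 16 * real n * max B 0 / y\<^sup>2 * measure M E"
proof -
  define A where "A k = E \<inter> {\<omega>\<in>space M. \<forall>j\<in>{..k}. y / 2 < X (s + j) \<omega>}" for k
  have "E \<in> sets (F (s + k))" for k
    using filt_mono[of s "s + k"] E by auto
  moreover have "Measurable.pred (F (s + k)) (\<lambda>\<omega>. \<forall>j\<in>{..k}. y / 2 < X (s + j) \<omega>)" for k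
    by (rule pred_F_Ball_X[where \<tau> = "\<lambda>j. s + j"]) auto
  ultimately have A_F: "A k \<in> sets (F (s + k))" for k
    unfolding A_def space_F[symmetric, of "s + k"] by (intro sets.Int predE)
  define S where "S \<omega> = (\<Sum>k<n. indicator (A k) \<omega> * mart_incr (s + k) \<omega>)" for \<omega>
  have E_M: "E \<in> sets M"
    by (rule sets_F_in_sets[OF E])
  have S_sq: "integrable M (\<lambda>\<omega>. (S \<omega>)\<^sup>2)"
    and S_sq_le: "(\<integral>\<omega>. (S \<omega>)\<^sup>2 \<partial>M) \<le> n * (max B 0 * measure M E)"
    unfolding S_def using stopped_mart_sum_sq_le[OF s A_F E_M] by (auto simp: A_def)
  have "AE \<omega> in M. \<forall>k. x0 \<le> X (s + k) \<omega> \<longrightarrow> - c / X (s + k) \<omega> \<le> cond_drift (s + k) \<omega>"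
    unfolding AE_all_countable using s cond_drift_ge[of "s + _"] by simp
  then have "AE \<omega> in M. \<omega> \<in> E \<inter> {\<omega>\<in>space M. \<exists>j<n. X (s + j) \<omega> \<le> y / 2} \<longrightarrow> (y / 4)\<^sup>2 \<le> (S \<omega>)\<^sup>2"
  proof (eventually_elim, safe)
    fix \<omega> j assume "\<forall>k. x0 \<le> X (s + k) \<omega> \<longrightarrow> - c / X (s + k) \<omega> \<le> cond_drift (s + k) \<omega>"
      and "\<omega> \<in> E" "\<omega> \<in> space M" "j < n" "X (s + j) \<omega> \<le> y / 2"
    then have "(\<Sum>k<n. (if \<forall>j\<le>k. y / 2 < X (s + j) \<omega> then 1 else 0) * mart_incr (s + k) \<omega>) \<le> - y / 4"
      using y x0_le n by (intro stopped_mart_sum_le_if_drop E_ge) auto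
    moreover have "S \<omega> = (\<Sum>k<n. (if \<forall>j\<le>k. y / 2 < X (s + j) \<omega> then 1 else 0) * mart_incr (s + k) \<omega>)"
      unfolding S_def A_def using \<open>\<omega> \<in> E\<close> \<open>\<omega> \<in> space M\<close> by (intro sum.cong) (auto simp: indicator_def)
    ultimately have "y / 4 \<le> \<bar>S \<omega>\<bar>"
      by linarith
    then have "(y / 4)\<^sup>2 \<le> \<bar>S \<omega>\<bar>\<^sup>2"
      using y by (intro power_mono) auto
    then show "(y / 4)\<^sup>2 \<le> (S \<omega>)\<^sup>2"
      by simp
  qed
  then have "measure M (E \<inter> {\<omega>\<in>space M. \<exists>j<n. X (s + j) \<omega> \<le> y / 2})
      \<le> measure M {\<omega>\<in>space M. (y / 4)\<^sup>2 \<le> (S \<omega>)\<^sup>2}"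
    using E_M S_sq by (intro finite_measure_mono_AE) auto
  also have "\<dots> \<le> (\<integral>\<omega>. (S \<omega>)\<^sup>2 \<partial>M) / (y / 4)\<^sup>2"
    using S_sq y by (intro integral_Markov_inequality_measure[where A = "space M"]) auto
  also have "\<dots> \<le> n * (max B 0 * measure M E) / (y / 4)\<^sup>2"
    using S_sq_le by (intro divide_right_mono) auto
  also have "\<dots> = 16 * real n * max B 0 / y\<^sup>2 * measure M E"
    by (simp add: power_divide)
  finally show ?thesis .
qed

lemma first_passage_sets_F: "{\<omega>\<in>space M. first_passage X y s \<omega>} \<in> sets (F s)"
proof -
  have [measurable]: "Measurable.pred (F s) (\<lambda>\<omega>. \<forall>u\<in>{1..<s}. X u \<omega> < y)"
    "Measurable.pred (F s) (\<lambda>\<omega>. \<forall>u\<in>{1<..s}. X u \<omega> \<noteq> 0)"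
    by (rule pred_F_Ball_X[where \<tau> = "\<lambda>u. u"]; simp)+
  have [measurable]: "X s \<in> borel_measurable (F s)"
    by (rule adapted)
  show ?thesis
    unfolding space_F[symmetric, of s] first_passage_def by measurable
qed

lemma excursion_stays_above_measurable [measurable]:
  "Measurable.pred M (excursion_stays_above X a n)"
  unfolding excursion_stays_above_def by measurable

lemma first_passage_prob_le_twice_stays_above:
  fixes n :: nat
  assumes y: "y > 0" and x0_le: "x0 \<le> y / 2"
    and n: "8 * c * real n \<le> y\<^sup>2" "16 * real n * max B 0 / y\<^sup>2 \<le> 1 / 2"
  shows "measure M {\<omega>\<in>space M. first_passage X y s \<omega>}
           \<le> 2 * measure M {\<omega>\<in>space M. first_passage X y s \<omega> \<and> (\<forall>j<n. y / 2 < X (s + j) \<omega>)}"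
proof (cases "s \<ge> 1")
  case True
  define E where "E = {\<omega>\<in>space M. first_passage X y s \<omega>}"
  define Drop where "Drop = {\<omega>\<in>space M. \<exists>j<n. X (s + j) \<omega> \<le> y / 2}"
  have E_M: "E \<in> sets M"
    unfolding E_def by (rule sets_F_in_sets[OF first_passage_sets_F])
  have "measure M (E \<inter> Drop) \<le> 16 * real n * max B 0 / y\<^sup>2 * measure M E"
    unfolding E_def Drop_def
    by (rule drop_below_half_prob_le[OF True first_passage_sets_F _ y x0_le n(1)])
      (simp add: first_passage_def)
  also have "\<dots> \<le> 1 / 2 * measure M E"
    using n(2) by (intro mult_right_mono) auto
  finally have "measure M E \<le> 2 * measure M (E - Drop)"
    using finite_measure_Diff'[OF E_M, of Drop] unfolding Drop_def by simp
  also have "E - Drop = {\<omega>\<in>space M. first_passage X y s \<omega> \<and> (\<forall>j<n. y / 2 < X (s + j) \<omega>)}"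
    by (auto simp: E_def Drop_def not_le)
  finally show ?thesis
    by (simp add: E_def)
qed (simp add: first_passage_def)

lemma M1_tail_le_excursion_stays_above:
  fixes n :: nat
  assumes S_valued: "\<And>t \<omega>. \<omega> \<in> space M \<Longrightarrow> X t \<omega> \<in> S" and S_locfin: "\<And>b. finite (S \<inter> {..b})"
    and y: "y > 0" and x0_le: "x0 \<le> y / 2"
    and n: "8 * c * real n \<le> y\<^sup>2" "16 * real n * max B 0 / y\<^sup>2 \<le> 1 / 2"
  shows "measure M {\<omega>\<in>space M. ereal y \<le> M1 X \<omega>}
           \<le> 2 * measure M {\<omega>\<in>space M. excursion_stays_above X (y / 2) n \<omega>}"
proof -
  define E where "E s = {\<omega>\<in>space M. first_passage X y s \<omega>}" for s
  define G where "G s = {\<omega>\<in>space M. first_passage X y s \<omega> \<and> (\<forall>j<n. y / 2 < X (s + j) \<omega>)}" for s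
  have E_M: "E s \<in> sets M" for s
    unfolding E_def by (rule sets_F_in_sets[OF first_passage_sets_F])
  have G_M: "G s \<in> sets M" for s
  proof -
    have "G s = E s \<inter> {\<omega>\<in>space M. \<forall>j<n. y / 2 < X (s + j) \<omega>}"
      by (auto simp: E_def G_def)
    then show ?thesis
      using E_M by simp
  qed
  have "E m \<inter> E n = {}" if "m \<noteq> n" for m n
    using first_passage_unique[of X y m _ n] that unfolding E_def by blast
  then have "disjoint_family E"
    by (simp add: disjoint_family_on_def)
  moreover have "disjoint_family G"
    using calculation by (rule disjoint_family_on_bisimulation) (auto simp: E_def G_def)
  ultimately have E_sums: "(\<lambda>s. measure M (E s)) sums measure M (\<Union>s. E s)"
    and G_sums: "(\<lambda>s. 2 * measure M (G s)) sums (2 * measure M (\<Union>s. G s))"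
    using E_M G_M by (auto intro!: finite_measure_UNION sums_mult)
  have sum_le: "measure M (\<Union>s. E s) \<le> 2 * measure M (\<Union>s. G s)"
  proof (rule sums_le[OF _ E_sums G_sums])
    show "measure M (E s) \<le> 2 * measure M (G s)" for s
      unfolding E_def G_def by (rule first_passage_prob_le_twice_stays_above[OF y x0_le n])
  qed
  have "{\<omega>\<in>space M. ereal y \<le> M1 X \<omega>} \<subseteq> (\<Union>s. E s)"
  proof
    fix \<omega> assume "\<omega> \<in> {\<omega>\<in>space M. ereal y \<le> M1 X \<omega>}"
    then have "\<omega> \<in> space M" "ereal y \<le> M1 X \<omega>"
      by auto
    then obtain t where t: "1 \<le> t" "enat t < tau1 X \<omega>" "y \<le> X t \<omega>"
      using exists_ge_if_M1_ge[of X \<omega> S y] S_valued S_locfin by blast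
    obtain s where "first_passage X y s \<omega>"
      using first_passage_if_reaches[OF t] by blast
    then show "\<omega> \<in> (\<Union>s. E s)"
      using \<open>\<omega> \<in> space M\<close> by (auto simp: E_def)
  qed
  then have "measure M {\<omega>\<in>space M. ereal y \<le> M1 X \<omega>} \<le> measure M (\<Union>s. E s)"
    using E_M by (intro finite_measure_mono) auto
  also have "\<dots> \<le> 2 * measure M (\<Union>s. G s)"
    by (rule sum_le)
  also have "measure M (\<Union>s. G s) \<le> measure M {\<omega>\<in>space M. excursion_stays_above X (y / 2) n \<omega>}"
  proof (rule finite_measure_mono)
    show "(\<Union>s. G s) \<subseteq> {\<omega>\<in>space M. excursion_stays_above X (y / 2) n \<omega>}"
      using excursion_stays_above_if_first_passage by (fastforce simp: G_def)
  qed measurable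
  finally show ?thesis
    by simp
qed

lemma M1_tail_le_excursion_stays_above_eventually:
  assumes S_valued: "\<And>t \<omega>. \<omega> \<in> space M \<Longrightarrow> X t \<omega> \<in> S" and S_locfin: "\<And>b. finite (S \<inter> {..b})"
  shows "\<exists>\<epsilon>>0. \<exists>y0>0. \<forall>y\<ge>y0. measure M {\<omega>\<in>space M. ereal y \<le> M1 X \<omega>}
           \<le> 2 * measure M {\<omega>\<in>space M. excursion_stays_above X (y / 2) (nat \<lceil>\<epsilon> * y\<^sup>2\<rceil>) \<omega>}"
proof (intro exI conjI allI impI)
  define K where "K = max B 0 + c"
  have K: "K > 0"
    using c_pos by (simp add: K_def add_nonneg_pos)
  show "1 / (64 * K) > 0" "max (2 * x0) (64 * K + 1) > 0"
    using K by auto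
  fix y assume y: "max (2 * x0) (64 * K + 1) \<le> y"
  note bounds = nat_ceiling_quadratic_bounds[of "max B 0" c y, folded K_def]
  show "measure M {\<omega>\<in>space M. ereal y \<le> M1 X \<omega>}
      \<le> 2 * measure M {\<omega>\<in>space M. excursion_stays_above X (y / 2) (nat \<lceil>1 / (64 * K) * y\<^sup>2\<rceil>) \<omega>}"
    using y K c_pos bounds
    by (intro M1_tail_le_excursion_stays_above[OF S_valued S_locfin]) auto
qed

lemma M1_tail_le_additive_functional_tail:
  assumes S_nonneg: "S \<subseteq> {0..}" and S_valued: "\<And>t \<omega>. \<omega> \<in> space M \<Longrightarrow> X t \<omega> \<in> S"
    and S_locfin: "\<And>b. finite (S \<inter> {..b})"
    and \<Phi>_mono: "mono_on {0..} \<Phi>" and \<Phi>_nonneg: "\<And>x. x \<ge> 0 \<Longrightarrow> \<Phi> x \<ge> 0"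
  shows "\<exists>\<epsilon>>0. \<exists>y0. \<forall>y\<ge>y0. measure M {\<omega>\<in>space M. M1 X \<omega> \<ge> ereal y}
           \<le> 2 * measure M {\<omega>\<in>space M. additive_functional \<Phi> X \<omega> \<ge> ennreal (\<epsilon> * y\<^sup>2 * \<Phi> (y / 2))}"
proof -
  obtain \<epsilon> y0 where "\<epsilon> > 0" "y0 > 0" and tail: "\<And>y. y \<ge> y0 \<Longrightarrow> measure M {\<omega>\<in>space M. ereal y \<le> M1 X \<omega>}
      \<le> 2 * measure M {\<omega>\<in>space M. excursion_stays_above X (y / 2) (nat \<lceil>\<epsilon> * y\<^sup>2\<rceil>) \<omega>}"
    using M1_tail_le_excursion_stays_above_eventually[OF S_valued S_locfin] by blast
  have X_nonneg: "X t \<omega> \<ge> 0" if "\<omega> \<in> space M" for t \<omega>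
    using S_valued[OF that] S_nonneg by auto
  have [measurable]: "additive_functional \<Phi> X \<in> borel_measurable M"
    using X_nonneg \<Phi>_mono by (intro additive_functional_measurable) simp_all
  have stays_le: "measure M {\<omega>\<in>space M. excursion_stays_above X (y / 2) (nat \<lceil>\<epsilon> * y\<^sup>2\<rceil>) \<omega>}
      \<le> measure M {\<omega>\<in>space M. additive_functional \<Phi> X \<omega> \<ge> ennreal (\<epsilon> * y\<^sup>2 * \<Phi> (y / 2))}"
    if "y \<ge> y0" for y
  proof (rule finite_measure_mono, safe)
    fix \<omega> assume "\<omega> \<in> space M" "excursion_stays_above X (y / 2) (nat \<lceil>\<epsilon> * y\<^sup>2\<rceil>) \<omega>"
    have "ennreal (\<epsilon> * y\<^sup>2 * \<Phi> (y / 2)) \<le> ennreal (real (nat \<lceil>\<epsilon> * y\<^sup>2\<rceil>) * \<Phi> (y / 2))"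
      using \<Phi>_nonneg[of "y / 2"] \<open>y0 > 0\<close> that
      by (intro ennreal_leI mult_right_mono real_nat_ceiling_ge) auto
    also have "\<dots> \<le> additive_functional \<Phi> X \<omega>"
      using \<open>y0 > 0\<close> that \<Phi>_mono \<Phi>_nonneg
      by (intro excursion_stays_above_imp_additive_functional_ge[OF \<open>excursion_stays_above _ _ _ \<omega>\<close>]) auto
    finally show "ennreal (\<epsilon> * y\<^sup>2 * \<Phi> (y / 2)) \<le> additive_functional \<Phi> X \<omega>" .
  qed measurable
  have "measure M {\<omega>\<in>space M. M1 X \<omega> \<ge> ereal y}
      \<le> 2 * measure M {\<omega>\<in>space M. additive_functional \<Phi> X \<omega> \<ge> ennreal (\<epsilon> * y\<^sup>2 * \<Phi> (y / 2))}"
    if "y \<ge> y0" for y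
    using tail[OF that] stays_le[OF that] by linarith
  then show ?thesis
    using \<open>\<epsilon> > 0\<close> by blast
qed

lemma eta1_tail_ge_half_M1_tail:
  assumes S_valued: "\<And>t \<omega>. \<omega> \<in> space M \<Longrightarrow> X t \<omega> \<in> S" and S_locfin: "\<And>b. finite (S \<inter> {..b})"
  shows "\<exists>\<epsilon>>0. \<exists>x1. \<forall>x\<ge>x1. measure M {\<omega>\<in>space M. ereal_of_enat (eta1 X \<omega>) \<ge> ereal x}
           \<ge> 1 / 2 * measure M {\<omega>\<in>space M. M1 X \<omega> \<ge> ereal ((x / \<epsilon>) powr (1 / 2))}"
proof -
  obtain \<epsilon> y0 where "\<epsilon> > 0" "y0 > 0" and tail: "\<And>y. y \<ge> y0 \<Longrightarrow> measure M {\<omega>\<in>space M. ereal y \<le> M1 X \<omega>}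
      \<le> 2 * measure M {\<omega>\<in>space M. excursion_stays_above X (y / 2) (nat \<lceil>\<epsilon> * y\<^sup>2\<rceil>) \<omega>}"
    using M1_tail_le_excursion_stays_above_eventually[OF S_valued S_locfin] by blast
  have "1 / 2 * measure M {\<omega>\<in>space M. M1 X \<omega> \<ge> ereal ((x / \<epsilon>) powr (1 / 2))}
      \<le> measure M {\<omega>\<in>space M. ereal_of_enat (eta1 X \<omega>) \<ge> ereal x}"
    if x: "x \<ge> \<epsilon> * y0\<^sup>2" for x
  proof -
    define y where "y = (x / \<epsilon>) powr (1 / 2)"
    have "x > 0"
      using x mult_pos_pos[OF \<open>\<epsilon> > 0\<close> zero_less_power[OF \<open>y0 > 0\<close>, of 2]] by linarith
    then have y_sq: "\<epsilon> * y\<^sup>2 = x"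
      using \<open>\<epsilon> > 0\<close> by (simp add: y_def powr_half_sqrt)
    have "y0 \<le> y"
      using x \<open>\<epsilon> > 0\<close> \<open>y0 > 0\<close> \<open>x > 0\<close>
      by (simp add: y_def powr_half_sqrt real_le_rsqrt field_simps)
    have "measure M {\<omega>\<in>space M. excursion_stays_above X (y / 2) (nat \<lceil>x\<rceil>) \<omega>}
        \<le> measure M {\<omega>\<in>space M. ereal_of_enat (eta1 X \<omega>) \<ge> ereal x}"
    proof (rule finite_measure_mono, safe)
      fix \<omega> assume "excursion_stays_above X (y / 2) (nat \<lceil>x\<rceil>) \<omega>"
      then show "ereal x \<le> ereal_of_enat (eta1 X \<omega>)"
        using \<open>y0 \<le> y\<close> \<open>y0 > 0\<close>
        by (simp add: ereal_le_ereal_of_enat_iff excursion_stays_above_imp_eta1_ge)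
    qed (simp add: eta1_ge_sets)
    moreover have "measure M {\<omega>\<in>space M. ereal y \<le> M1 X \<omega>}
        \<le> 2 * measure M {\<omega>\<in>space M. excursion_stays_above X (y / 2) (nat \<lceil>x\<rceil>) \<omega>}"
      using tail[OF \<open>y0 \<le> y\<close>] by (simp only: y_sq)
    ultimately show ?thesis
      unfolding y_def[symmetric] by linarith
  qed
  then show ?thesis
    using \<open>\<epsilon> > 0\<close> by blast
qed

end

theorem lemma4p11:
  fixes M :: "'a measure" and F :: "nat \<Rightarrow> 'a measure" and X :: "nat \<Rightarrow> 'a \<Rightarrow> real"
    and S :: "real set" and m :: "real \<Rightarrow> real \<Rightarrow> nat" and \<phi> :: "real \<Rightarrow> real \<Rightarrow> real"
    and B x0 c :: real and \<Phi> :: "real \<Rightarrow> real"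
  assumes prob: "prob_space M"
    and S_nonneg: "S \<subseteq> {0..}"
    and S_locfin: "\<And>b. finite (S \<inter> {..b})"
    and S_unbdd: "\<not> bdd_above S"
    and S_zero: "0 \<in> S"
    and filt_sub: "\<And>t. subalgebra M (F t)"
    and filt_mono: "\<And>s t. s \<le> t \<Longrightarrow> sets (F s) \<subseteq> sets (F t)"
    and adapted: "\<And>t. X t \<in> borel_measurable (F t)"
    and S_valued: "\<And>t \<omega>. \<omega> \<in> space M \<Longrightarrow> X t \<omega> \<in> S"
    and start: "AE \<omega> in M. X 1 \<omega> = 0"
    and \<phi>_pos: "\<And>x y. x \<in> S \<Longrightarrow> y \<in> S \<Longrightarrow> \<phi> x y > 0"
    and irred: "\<And>t y. t \<ge> 1 \<Longrightarrow> y \<in> S \<Longrightarrow>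
        AE \<omega> in M. real_cond_exp M (F t)
            (indicator {\<omega>' \<in> space M. X (t + m (X t \<omega>') y) \<omega>' = y}) \<omega> \<ge> \<phi> (X t \<omega>) y"
    and B_fin: "\<And>t. t \<ge> 1 \<Longrightarrow>
        AE \<omega> in M. nn_cond_exp M (F t) (\<lambda>\<omega>'. ennreal ((X (Suc t) \<omega>' - X t \<omega>')\<^sup>2)) \<omega> \<le> ennreal B"
    and x0_pos: "x0 > 0" and c_pos: "c > 0"
    and drift: "\<And>t. t \<ge> 1 \<Longrightarrow>
        AE \<omega> in M. X t \<omega> \<ge> x0 \<longrightarrow>
          real_cond_exp M (F t) (\<lambda>\<omega>'. X (Suc t) \<omega>' - X t \<omega>') \<omega> \<ge> - c / X t \<omega>"
    and \<Phi>_mono: "mono_on {0..} \<Phi>"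
    and \<Phi>_nonneg: "\<And>x. x \<ge> 0 \<Longrightarrow> \<Phi> x \<ge> 0"
  shows "(\<exists>\<epsilon>>0. \<exists>y0. \<forall>y\<ge>y0.
            measure M {\<omega> \<in> space M. M1 X \<omega> \<ge> ereal y}
              \<le> 2 * measure M {\<omega> \<in> space M.
                     additive_functional \<Phi> X \<omega> \<ge> ennreal (\<epsilon> * y\<^sup>2 * \<Phi> (y / 2))})
       \<and> (\<exists>\<epsilon>>0. \<exists>x1. \<forall>x\<ge>x1.
            measure M {\<omega> \<in> space M. ereal_of_enat (eta1 X \<omega>) \<ge> ereal x}
              \<ge> 1/2 * measure M {\<omega> \<in> space M. M1 X \<omega> \<ge> ereal ((x / \<epsilon>) powr (1/2))})"
proof -
  interpret lamperti_process M F X B x0 c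
    using prob filt_sub filt_mono adapted B_fin c_pos drift
    by (simp add: lamperti_process_def lamperti_process_axioms_def)
  show ?thesis
    using M1_tail_le_additive_functional_tail[OF S_nonneg S_valued S_locfin \<Phi>_mono \<Phi>_nonneg]
      eta1_tail_ge_half_M1_tail[OF S_valued S_locfin]
    by blast
qed

end
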